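(* If $G$ is a triangle-free graph of order $n$, then $q_n(G)<2n/9$, where $q_n(G)$ is the smallest eigenvalue of the signless Laplacian of $G$.
   Context: Graphs are finite and simple. For a graph $G$ with adjacency matrix $A$ and diagonal degree matrix $D$, the signless Laplacian is $Q(G)=D+A$; $q_n(G)$ is its smallest eigenvalue. *)

theory Defs
  imports "HOL-Analysis.Analysis"
begin

definition simple_graph :: "('n::finite \<Rightarrow> 'n \<Rightarrow> bool) \<Rightarrow> bool" where
  "simple_graph E \<longleftrightarrow> (\<forall>u v. E u v \<longrightarrow> E v u) \<and> (\<forall>v. \<not> E v v)"

definition triangle_free :: "('n::finite \<Rightarrow> 'n \<Rightarrow> bool) \<Rightarrow> bool" where
  "triangle_free E \<longleftrightarrow> \<not> (\<exists>u v w. E u v \<and> E v w \<and> E w u)"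

definition adjacency_matrix :: "('n::finite \<Rightarrow> 'n \<Rightarrow> bool) \<Rightarrow> real^'n^'n" where
  "adjacency_matrix E = (\<chi> i j. if E i j then 1 else 0)"

definition degree :: "('n::finite \<Rightarrow> 'n \<Rightarrow> bool) \<Rightarrow> 'n \<Rightarrow> nat" where
  "degree E v = card {u. E v u}"

definition degree_matrix :: "('n::finite \<Rightarrow> 'n \<Rightarrow> bool) \<Rightarrow> real^'n^'n" where
  "degree_matrix E = (\<chi> i j. if i = j then real (degree E i) else 0)"

definition signless_laplacian :: "('n::finite \<Rightarrow> 'n \<Rightarrow> bool) \<Rightarrow> real^'n^'n" where
  "signless_laplacian E = degree_matrix E + adjacency_matrix E"

definition eigenvalues :: "real^'n^'n \<Rightarrow> real set" where
  "eigenvalues M = {c. \<exists>v. v \<noteq> 0 \<and> M *v v = c *\<^sub>R v}"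

definition smallest_eigenvalue :: "real^'n^'n \<Rightarrow> real" where
  "smallest_eigenvalue M = Min (eigenvalues M)"

end

theory Submission imports Defs begin

text \<open>For a vertex v let x be 2 on the neighbourhood of v and -1 elsewhere. Since
x' Q x is the sum of (x_i + x_j)^2 over the edges ij and the neighbourhood of v is
independent, every edge contributes 1 or 4. Summing x' Q x and x' x over all v gives
2nS - 3P and 3S + n^2, where S and P are the sums of the degrees and of their squares;
Cauchy-Schwarz S^2 \<le> nP shows that the first is less than 2n/9 times the second.
Hence some test vector has Rayleigh quotient below 2n/9, and for a symmetric matrix the
minimum of the Rayleigh quotient is its smallest eigenvalue.\<close>

lemma inner_matrix_vector_mult_symmetric:
  fixes M :: "real^'n^'n"
  assumes "transpose M = M"
  shows "x \<bullet> (M *v y) = (M *v x) \<bullet> y"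
proof -
  have "x \<bullet> (M *v y) = (x v* M) \<bullet> y"
    by (simp add: dot_lmul_matrix)
  also have "x v* M = M *v x"
    by (metis assms transpose_matrix_vector)
  finally show ?thesis .
qed

lemma rayleigh_minimum_exists:
  fixes M :: "real^'n^'n"
  obtains x where "norm x = 1" and "\<And>y. (x \<bullet> (M *v x)) * (y \<bullet> y) \<le> y \<bullet> (M *v y)"
proof -
  have "continuous_on (sphere 0 1) (\<lambda>x::real^'n. x \<bullet> (M *v x))"
    by (intro continuous_on_inner continuous_on_id matrix_vector_mult_linear_continuous_on)
  moreover have "sphere (0::real^'n) 1 \<noteq> {}"
    by (simp add: sphere_eq_empty)
  ultimately obtain x where x: "x \<in> sphere 0 1"
    and min: "\<And>y. y \<in> sphere 0 1 \<Longrightarrow> x \<bullet> (M *v x) \<le> y \<bullet> (M *v y)"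
    using continuous_attains_inf[OF compact_sphere] by blast
  have "(x \<bullet> (M *v x)) * (y \<bullet> y) \<le> y \<bullet> (M *v y)" for y
  proof (cases "y = 0")
    case False
    have "x \<bullet> (M *v x) \<le> (y /\<^sub>R norm y) \<bullet> (M *v (y /\<^sub>R norm y))"
      using False by (intro min) simp
    also have "\<dots> = (y \<bullet> (M *v y)) / (y \<bullet> y)"
      by (simp add: matrix_vector_mult_scaleR divide_inverse power2_norm_eq_inner[symmetric]
          power2_eq_square)
    finally show ?thesis
      using False by (simp add: pos_le_divide_eq)
  qed simp
  with x show thesis by (intro that) auto
qed

text \<open>Expand the form along x - t (B x): the linear term -2t |B x|^2 dominates for small t > 0.\<close>
lemma psd_form_zero_imp_kernel:
  fixes B :: "real^'n^'n"
  assumes sym: "transpose B = B" and psd: "\<And>y. 0 \<le> y \<bullet> (B *v y)"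
    and zero: "x \<bullet> (B *v x) = 0"
  shows "B *v x = 0"
proof (rule ccontr)
  define w where "w = B *v x"
  assume "B *v x \<noteq> 0"
  then have w_pos: "0 < w \<bullet> w" by (simp add: w_def)
  have expand: "(x - t *\<^sub>R w) \<bullet> (B *v (x - t *\<^sub>R w)) = t\<^sup>2 * (w \<bullet> (B *v w)) - 2 * t * (w \<bullet> w)"
    for t
    using inner_matrix_vector_mult_symmetric[OF sym, of x w] zero
    by (simp add: w_def matrix_vector_mult_diff_distrib matrix_vector_mult_scaleR
        inner_diff_left inner_diff_right inner_commute power2_eq_square algebra_simps)
  define t where "t = (w \<bullet> w) / (w \<bullet> (B *v w) + 1)"
  have t_pos: "0 < t"
    using w_pos psd[of w] by (simp add: t_def)
  have "t * (w \<bullet> (B *v w)) < w \<bullet> w"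
    using w_pos psd[of w] by (simp add: t_def field_simps)
  then have "t\<^sup>2 * (w \<bullet> (B *v w)) < t * (w \<bullet> w)"
    using t_pos by (simp add: power2_eq_square)
  moreover have "0 < t * (w \<bullet> w)" using t_pos w_pos by simp
  ultimately show False using expand[of t] psd[of "x - t *\<^sub>R w"] by linarith
qed

lemma rayleigh_minimum_is_eigenvalue:
  fixes M :: "real^'n^'n"
  assumes sym: "transpose M = M"
  obtains m where "m \<in> eigenvalues M" and "\<And>y. m * (y \<bullet> y) \<le> y \<bullet> (M *v y)"
proof -
  obtain x where x: "norm x = 1" and min: "\<And>y. (x \<bullet> (M *v x)) * (y \<bullet> y) \<le> y \<bullet> (M *v y)"
    using rayleigh_minimum_exists by blast
  define m where "m = x \<bullet> (M *v x)"
  define B where "B = M - m *\<^sub>R mat 1"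
  have B_apply: "B *v y = M *v y - m *\<^sub>R y" for y
    by (simp add: B_def matrix_vector_mult_diff_rdistrib scaleR_matrix_vector_assoc[symmetric])
  have "B *v x = 0"
  proof (rule psd_form_zero_imp_kernel)
    show "transpose B = B"
    proof -
      have "transpose B = transpose M - m *\<^sub>R transpose (mat 1)"
        by (simp add: B_def transpose_def vec_eq_iff)
      with sym show ?thesis by (simp add: B_def)
    qed
    show "0 \<le> y \<bullet> (B *v y)" for y
      using min[of y] by (simp add: B_apply inner_diff_right m_def mult.commute)
    show "x \<bullet> (B *v x) = 0"
      using x by (simp add: B_apply inner_diff_right m_def norm_eq_1)
  qed
  then have "m \<in> eigenvalues M"
    using x by (auto simp: eigenvalues_def B_apply intro!: exI[of _ x])
  with min show thesis by (intro that) (auto simp: m_def)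
qed

text \<open>Eigenvectors for distinct eigenvalues are orthogonal, hence independent.\<close>
lemma finite_eigenvalues_symmetric:
  fixes M :: "real^'n^'n"
  assumes sym: "transpose M = M"
  shows "finite (eigenvalues M)"
proof -
  define f where "f c = (SOME v. v \<noteq> 0 \<and> M *v v = c *\<^sub>R v)" for c
  have f: "f c \<noteq> 0 \<and> M *v f c = c *\<^sub>R f c" if "c \<in> eigenvalues M" for c
    using that unfolding eigenvalues_def f_def by (metis (mono_tags, lifting) mem_Collect_eq someI)
  have inj: "inj_on f (eigenvalues M)"
  proof (rule inj_onI)
    fix a b assume a: "a \<in> eigenvalues M" and b: "b \<in> eigenvalues M" and "f a = f b"
    then have "a *\<^sub>R f a = b *\<^sub>R f a" using f by metis
    then show "a = b" using f[OF a] by simp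
  qed
  have "pairwise orthogonal (f ` eigenvalues M)"
  proof (clarsimp simp: pairwise_def)
    fix a b assume a: "a \<in> eigenvalues M" and b: "b \<in> eigenvalues M" and "f a \<noteq> f b"
    then have "a \<noteq> b" by auto
    have "b * (f a \<bullet> f b) = a * (f a \<bullet> f b)"
      using inner_matrix_vector_mult_symmetric[OF sym, of "f a" "f b"] f[OF a] f[OF b] by simp
    with \<open>a \<noteq> b\<close> show "orthogonal (f a) (f b)" by (simp add: orthogonal_def)
  qed
  moreover have "0 \<notin> f ` eigenvalues M" using f by auto
  ultimately have "finite (f ` eigenvalues M)"
    by (intro independent_imp_finite pairwise_orthogonal_independent)
  with inj show ?thesis using finite_imageD by blast
qed

lemma smallest_eigenvalue_less:
  fixes M :: "real^'n^'n"
  assumes sym: "transpose M = M" and x: "x \<bullet> (M *v x) < c * (x \<bullet> x)"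
  shows "smallest_eigenvalue M < c"
proof -
  obtain m where m: "m \<in> eigenvalues M" and min: "m * (x \<bullet> x) \<le> x \<bullet> (M *v x)"
    using rayleigh_minimum_is_eigenvalue[OF sym] by metis
  have "0 < x \<bullet> x" using x by (cases "x = 0") auto
  then have "m < c" using min x by (smt (verit) mult_right_mono)
  moreover have "smallest_eigenvalue M \<le> m"
    unfolding smallest_eigenvalue_def using finite_eigenvalues_symmetric[OF sym] m by simp
  ultimately show ?thesis by simp
qed

lemma degree_eq_sum_adjacency:
  "real (degree E v) = (\<Sum>u\<in>UNIV. adjacency_matrix E $ v $ u)"
  by (simp add: degree_def adjacency_matrix_def sum.If_cases)

lemma signless_laplacian_entry:
  "signless_laplacian E $ i $ j
    = (if i = j then real (degree E i) else 0) + adjacency_matrix E $ i $ j"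
  by (simp add: signless_laplacian_def degree_matrix_def)

lemma simple_graph_sym: "simple_graph E \<Longrightarrow> E u v = E v u"
  unfolding simple_graph_def by blast

lemma adjacency_matrix_sym:
  "simple_graph E \<Longrightarrow> adjacency_matrix E $ i $ j = adjacency_matrix E $ j $ i"
  by (simp add: adjacency_matrix_def simple_graph_sym)

lemma transpose_signless_laplacian:
  assumes "simple_graph E"
  shows "transpose (signless_laplacian E) = signless_laplacian E"
  using adjacency_matrix_sym[OF assms]
  by (simp add: vec_eq_iff transpose_def signless_laplacian_entry)

text \<open>Equivalently, the sum of (x_i + x_j)^2 over the edges ij.\<close>
lemma inner_signless_laplacian:
  fixes x :: "real^'n::finite"
  shows "x \<bullet> (signless_laplacian E *v x)
    = (\<Sum>i\<in>UNIV. \<Sum>j\<in>UNIV. adjacency_matrix E $ i $ j * ((x$i)\<^sup>2 + x$i * x$j))"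
proof -
  have "x \<bullet> (signless_laplacian E *v x)
      = (\<Sum>i\<in>UNIV. x$i * (real (degree E i) * x$i + (\<Sum>j\<in>UNIV. adjacency_matrix E $ i $ j * x$j)))"
    unfolding inner_vec_def matrix_vector_mult_def signless_laplacian_entry
    by (simp add: distrib_right sum.distrib if_distrib[of "\<lambda>a. a * _"] cong: if_cong)
  also have "\<dots> = (\<Sum>i\<in>UNIV. \<Sum>j\<in>UNIV. adjacency_matrix E $ i $ j * ((x$i)\<^sup>2 + x$i * x$j))"
    by (simp add: degree_eq_sum_adjacency sum_distrib_left sum_distrib_right sum.distrib
        power2_eq_square algebra_simps)
  finally show ?thesis .
qed

definition neighbourhood_test_vector :: "('n::finite \<Rightarrow> 'n \<Rightarrow> bool) \<Rightarrow> 'n \<Rightarrow> real^'n" where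
  "neighbourhood_test_vector E v = (\<chi> u. if E v u then 2 else -1)"

lemma inner_neighbourhood_test_vector:
  fixes E :: "'n::finite \<Rightarrow> 'n \<Rightarrow> bool"
  shows "neighbourhood_test_vector E v \<bullet> neighbourhood_test_vector E v
    = 3 * real (degree E v) + real CARD('n)"
proof -
  have "neighbourhood_test_vector E v \<bullet> neighbourhood_test_vector E v
      = (\<Sum>u\<in>UNIV. 3 * adjacency_matrix E $ v $ u + 1)"
    unfolding inner_vec_def neighbourhood_test_vector_def adjacency_matrix_def
    by (rule sum.cong) auto
  then show ?thesis
    by (simp add: sum.distrib degree_eq_sum_adjacency sum_distrib_left)
qed

lemma signless_laplacian_form_neighbourhood_test_vector:
  assumes "simple_graph E" and "triangle_free E"
  shows "neighbourhood_test_vector E v \<bullet> (signless_laplacian E *v neighbourhood_test_vector E v)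
    = (\<Sum>i\<in>UNIV. \<Sum>j\<in>UNIV. adjacency_matrix E $ i $ j * (2 - 3 * adjacency_matrix E $ v $ j))"
proof -
  have "\<not> (E i j \<and> E v i \<and> E v j)" for i j
    using assms unfolding triangle_free_def by (metis simple_graph_sym)
  then show ?thesis
    unfolding inner_signless_laplacian
    by (intro sum.cong refl)
      (auto simp: neighbourhood_test_vector_def adjacency_matrix_def power2_eq_square)
qed

lemma sum_signless_laplacian_form_neighbourhood_test_vectors:
  fixes E :: "'n::finite \<Rightarrow> 'n \<Rightarrow> bool"
  assumes "simple_graph E" and "triangle_free E"
  shows "(\<Sum>v\<in>UNIV. neighbourhood_test_vector E v \<bullet>
            (signless_laplacian E *v neighbourhood_test_vector E v))
    = 2 * real CARD('n) * (\<Sum>v\<in>UNIV. real (degree E v))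
      - 3 * (\<Sum>v\<in>UNIV. (real (degree E v))\<^sup>2)"
proof -
  define A where "A = adjacency_matrix E"
  define d where "d v = real (degree E v)" for v
  have row: "(\<Sum>j\<in>UNIV. A $ i $ j) = d i" for i
    by (simp add: A_def d_def degree_eq_sum_adjacency)
  have column: "(\<Sum>i\<in>UNIV. A $ i $ j) = d j" for j
    unfolding row[symmetric] A_def by (metis adjacency_matrix_sym[OF assms(1)])
  have "(\<Sum>v\<in>UNIV. neighbourhood_test_vector E v \<bullet>
            (signless_laplacian E *v neighbourhood_test_vector E v))
      = (\<Sum>v\<in>UNIV. \<Sum>i\<in>UNIV. \<Sum>j\<in>UNIV. A $ i $ j * (2 - 3 * A $ v $ j))"
    unfolding signless_laplacian_form_neighbourhood_test_vector[OF assms] A_def ..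
  also have "\<dots> = (\<Sum>i\<in>UNIV. \<Sum>j\<in>UNIV. \<Sum>v\<in>UNIV. A $ i $ j * (2 - 3 * A $ v $ j))"
    by (subst sum.swap) (rule sum.cong[OF refl], rule sum.swap)
  also have "\<dots> = (\<Sum>i\<in>UNIV. \<Sum>j\<in>UNIV. 2 * real CARD('n) * A $ i $ j - 3 * (A $ i $ j * d j))"
    by (simp add: sum_subtractf sum_distrib_left[symmetric] column algebra_simps)
  also have "\<dots> = 2 * real CARD('n) * (\<Sum>j\<in>UNIV. d j) - 3 * (\<Sum>j\<in>UNIV. (d j)\<^sup>2)"
  proof -
    have "(\<Sum>i\<in>UNIV. \<Sum>j\<in>UNIV. A $ i $ j * d j) = (\<Sum>j\<in>UNIV. (d j)\<^sup>2)"
      by (subst sum.swap) (simp add: sum_distrib_right[symmetric] column power2_eq_square)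
    then show ?thesis
      by (simp add: sum_subtractf sum_distrib_left[symmetric] row)
  qed
  finally show ?thesis unfolding d_def .
qed

text \<open>By Cauchy-Schwarz S^2 \<le> n P, the gap is at least 27 S^2 - 12 n^2 S + 2 n^4
  = 27 (S - 2 n^2 / 9)^2 + (2/3) n^4.\<close>
lemma degree_sums_inequality:
  fixes n S P :: real
  assumes "0 < n" and "S\<^sup>2 \<le> n * P"
  shows "2 * n * S - 3 * P < 2 * n / 9 * (3 * S + n\<^sup>2)"
proof -
  have "0 < 27 * (S - 2 * n\<^sup>2 / 9)\<^sup>2 + 2 / 3 * n ^ 4"
    using assms(1) by (intro add_nonneg_pos) auto
  also have "\<dots> = 27 * S\<^sup>2 - 12 * n\<^sup>2 * S + 2 * n ^ 4"
    by (simp add: power2_eq_square power4_eq_xxxx algebra_simps)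
  finally have "n * (2 * n * S - 3 * P) < n * (2 * n / 9 * (3 * S + n\<^sup>2))"
    using assms(2) by (simp add: power2_eq_square power4_eq_xxxx algebra_simps)
  with assms(1) show ?thesis by simp
qed

lemma exists_less_of_sum_less:
  fixes f g :: "'a \<Rightarrow> real"
  assumes "sum f A < c * sum g A"
  obtains a where "a \<in> A" and "f a < c * g a"
  using sum_mono[of A "\<lambda>a. c * g a" f] assms by (force simp: sum_distrib_left not_less)

lemma triangle_free_rayleigh_bound:
  fixes E :: "'n::finite \<Rightarrow> 'n \<Rightarrow> bool"
  assumes "simple_graph E" and "triangle_free E"
  obtains x :: "real^'n"
    where "x \<bullet> (signless_laplacian E *v x) < 2 * real CARD('n) / 9 * (x \<bullet> x)"
proof -
  define d where "d v = real (degree E v)" for v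
  have "(\<Sum>v\<in>UNIV. d v)\<^sup>2 \<le> real CARD('n) * (\<Sum>v\<in>UNIV. (d v)\<^sup>2)"
    using sum_squared_le_sum_of_squares[of d UNIV] by (simp add: mult.commute)
  then have "(\<Sum>v\<in>UNIV. neighbourhood_test_vector E v \<bullet>
        (signless_laplacian E *v neighbourhood_test_vector E v))
      < 2 * real CARD('n) / 9 * (3 * (\<Sum>v\<in>UNIV. d v) + (real CARD('n))\<^sup>2)"
    unfolding sum_signless_laplacian_form_neighbourhood_test_vectors[OF assms] d_def[symmetric]
    by (intro degree_sums_inequality) auto
  also have "\<dots> = 2 * real CARD('n) / 9 *
      (\<Sum>v\<in>UNIV. neighbourhood_test_vector E v \<bullet> neighbourhood_test_vector E v)"
    by (simp add: inner_neighbourhood_test_vector sum.distrib sum_distrib_left d_def power2_eq_square)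
  finally show thesis
    by (rule exists_less_of_sum_less) (erule that)
qed

theorem corollary3:
  fixes E :: "'n::finite \<Rightarrow> 'n \<Rightarrow> bool"
  assumes "simple_graph E" and "triangle_free E"
  shows "smallest_eigenvalue (signless_laplacian E) < 2 * real CARD('n) / 9"
proof -
  obtain x :: "real^'n"
    where "x \<bullet> (signless_laplacian E *v x) < 2 * real CARD('n) / 9 * (x \<bullet> x)"
    using triangle_free_rayleigh_bound[OF assms] .
  with transpose_signless_laplacian[OF assms(1)] show ?thesis
    by (rule smallest_eigenvalue_less)
qed

end
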